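(* Let $q$ be a prime power. Every outcome of the random graph $H_q^*$ is $K_4$-free.
   Context: $\mathcal H$ is the Hermitian unital $\{\langle x,y,z\rangle : x^{q+1}+y^{q+1}+z^{q+1}=0\}$ in the projective plane $\mathrm{PG}(2,q^2)$ (it has $q^3+1$ points and every line meets it in $1$ or $q+1$ points; lines meeting it in $q+1$ points are secants). $H_q$ is the graph on the set of secants, two distinct secants adjacent iff they meet in a point of $\mathcal H$. For $P\in\mathcal H$, $C_P$ is the set of secants through $P$ and $\mathcal C=\{C_P:P\in\mathcal H\}$. The random graph $H_q^*$ on vertex set $V(H_q)$ is defined as follows: for each $C\in\mathcal C$, independently over cliques and vertices, each vertex of $C$ is placed in $A_C$ or $B_C$ with probability $1/2$ each; $H_q^*$ is the union over $C\in\mathcal C$ of the complete bipartite graphs with parts $A_C$ and $B_C$. *)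

theory Defs
  imports "HOL-Number_Theory.Number_Theory" "HOL-Library.Cardinality"
begin

type_synonym 'a vec3 = "'a \<times> 'a \<times> 'a"

definition pt :: "'a::field vec3 \<Rightarrow> 'a vec3 set" where
  "pt v = {(c * fst v, c * fst (snd v), c * snd (snd v)) | c. c \<noteq> 0}"

definition PG2 :: "'a::field vec3 set set" where
  "PG2 = {pt v | v. v \<noteq> (0, 0, 0)}"

definition line_of :: "'a::field vec3 \<Rightarrow> 'a vec3 set set" where
  "line_of l = {P \<in> PG2. \<exists>x y z. (x, y, z) \<in> P \<and>
       fst l * x + fst (snd l) * y + snd (snd l) * z = 0}"

definition lines :: "'a::field vec3 set set set" where
  "lines = {line_of l | l. l \<noteq> (0, 0, 0)}"

text \<open>Hermitian unital x^(q+1)+y^(q+1)+z^(q+1)=0 (field of order q^2).\<close>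
definition herm :: "nat \<Rightarrow> 'a::field vec3 set set" where
  "herm q = {P \<in> PG2. \<exists>x y z. (x, y, z) \<in> P \<and> x ^ (q + 1) + y ^ (q + 1) + z ^ (q + 1) = 0}"

definition secants :: "nat \<Rightarrow> 'a::field vec3 set set set" where
  "secants q = {L \<in> lines. card (L \<inter> herm q) = q + 1}"

definition clique_C :: "nat \<Rightarrow> 'a::field vec3 set \<Rightarrow> 'a vec3 set set set" where
  "clique_C q P = {L \<in> secants q. P \<in> L}"

text \<open>An outcome of H_q^*: side P L = True means L \<in> A_{C_P}, False means L \<in> B_{C_P}.
  Adjacency in the union of the complete bipartite graphs K(A_{C_P}, B_{C_P}).\<close>
definition Hstar_adj :: "nat \<Rightarrow> ('a::field vec3 set \<Rightarrow> 'a vec3 set set \<Rightarrow> bool)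
    \<Rightarrow> 'a vec3 set set \<Rightarrow> 'a vec3 set set \<Rightarrow> bool" where
  "Hstar_adj q side L M \<longleftrightarrow> (\<exists>P \<in> herm q. L \<in> clique_C q P \<and> M \<in> clique_C q P
      \<and> side P L \<noteq> side P M)"

end

theory Submission imports Defs begin

text \<open>Two adjacent secants of \<open>H\<^sub>q\<^sup>*\<close> meet in a point \<open>P\<close> of the unital at which the
  bipartition of \<open>C\<^sub>P\<close> separates them. A bipartition cannot separate three secants pairwise, so
  four pairwise adjacent secants would form a complete quadrilateral, no three of its lines
  concurrent, whose six vertices all lie on the unital. This is impossible by O'Nan's theorem:
  with the Frobenius map \<open>x \<mapsto> x\<^sup>q\<close> as conjugation, the unital consists of the isotropic points
  of a Hermitian form. Writing the three vertices on the fourth line in coordinates with respect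
  to the triangle of the other three lines, isotropy makes three products skew-Hermitian, and
  Menelaus' collinearity relation then forces the Gram determinant of the triangle to vanish.\<close>

fun dot3 :: "'a::field vec3 \<Rightarrow> 'a vec3 \<Rightarrow> 'a" where
  "dot3 (a1, a2, a3) (b1, b2, b3) = a1 * b1 + a2 * b2 + a3 * b3"

fun cross3 :: "'a::field vec3 \<Rightarrow> 'a vec3 \<Rightarrow> 'a vec3" where
  "cross3 (u1, u2, u3) (v1, v2, v3) = (u2 * v3 - u3 * v2, u3 * v1 - u1 * v3, u1 * v2 - u2 * v1)"

fun scale3 :: "'a::field \<Rightarrow> 'a vec3 \<Rightarrow> 'a vec3" where
  "scale3 k (v1, v2, v3) = (k * v1, k * v2, k * v3)"

fun add3 :: "'a::field vec3 \<Rightarrow> 'a vec3 \<Rightarrow> 'a vec3" where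
  "add3 (u1, u2, u3) (v1, v2, v3) = (u1 + v1, u2 + v2, u3 + v3)"

fun map3 :: "('a \<Rightarrow> 'b) \<Rightarrow> 'a vec3 \<Rightarrow> 'b vec3" where
  "map3 f (v1, v2, v3) = (f v1, f v2, f v3)"

definition det3 :: "'a::field vec3 \<Rightarrow> 'a vec3 \<Rightarrow> 'a vec3 \<Rightarrow> 'a" where
  "det3 u v w = dot3 u (cross3 v w)"

lemma dot3_scale3_right: "dot3 l (scale3 k v) = k * dot3 l v"
  by (cases l rule: prod_cases3; cases v rule: prod_cases3) (simp add: algebra_simps)

lemma dot3_scale3_left: "dot3 (scale3 k u) v = k * dot3 u v"
  by (cases u rule: prod_cases3; cases v rule: prod_cases3) (simp add: algebra_simps)

lemma dot3_add3_right: "dot3 l (add3 u v) = dot3 l u + dot3 l v"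
  by (cases l rule: prod_cases3; cases u rule: prod_cases3; cases v rule: prod_cases3)
    (simp add: algebra_simps)

lemma dot3_cross3: "dot3 (cross3 u v) x = det3 x u v"
  by (cases u rule: prod_cases3; cases v rule: prod_cases3; cases x rule: prod_cases3)
    (simp add: det3_def algebra_simps)

lemma dot3_0_left [simp]: "dot3 (0, 0, 0) v = 0"
  by (cases v rule: prod_cases3) simp

lemma scale3_0_left [simp]: "scale3 0 u = (0, 0, 0)"
  by (cases u rule: prod_cases3) simp

lemma add3_0 [simp]: "add3 (0, 0, 0) u = u" "add3 u (0, 0, 0) = u"
  by (cases u rule: prod_cases3; simp)+

lemma scale3_eq_0_iff: "scale3 k v = (0, 0, 0) \<longleftrightarrow> k = 0 \<or> v = (0, 0, 0)"
  by (cases v rule: prod_cases3) auto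

lemma cross3_cross3: "cross3 l (cross3 u v) = add3 (scale3 (dot3 l v) u) (scale3 (- dot3 l u) v)"
  by (cases l rule: prod_cases3; cases u rule: prod_cases3; cases v rule: prod_cases3)
    (simp add: algebra_simps)

lemma scale3_det3_eq:
  "scale3 (det3 u v w) l = add3 (add3 (scale3 (dot3 l u) (cross3 v w))
     (scale3 (dot3 l v) (cross3 w u))) (scale3 (dot3 l w) (cross3 u v))"
  by (cases l rule: prod_cases3; cases u rule: prod_cases3; cases v rule: prod_cases3;
      cases w rule: prod_cases3) (simp add: det3_def algebra_simps)

lemma cramer3:
  "scale3 (det3 a b c) x =
     add3 (add3 (scale3 (det3 x b c) a) (scale3 (det3 a x c) b)) (scale3 (det3 a b x) c)"
  by (cases a rule: prod_cases3; cases b rule: prod_cases3; cases c rule: prod_cases3;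
      cases x rule: prod_cases3) (simp add: det3_def algebra_simps)

lemma det3_add3_scale3:
  "det3 (add3 (scale3 bx b) (scale3 cx c)) (add3 (scale3 ay a) (scale3 cy c))
     (add3 (scale3 az a) (scale3 bz b)) = det3 a b c * (bx * cy * az + cx * ay * bz)"
  by (cases a rule: prod_cases3; cases b rule: prod_cases3; cases c rule: prod_cases3)
    (simp add: det3_def algebra_simps)

text \<open>Cauchy--Binet for \<open>3 \<times> 3\<close> determinants.\<close>
lemma det3_mult_det3:
  "det3 a b c * det3 a' b' c' =
     dot3 a a' * (dot3 b b' * dot3 c c' - dot3 b c' * dot3 c b')
   - dot3 a b' * (dot3 b a' * dot3 c c' - dot3 b c' * dot3 c a')
   + dot3 a c' * (dot3 b a' * dot3 c b' - dot3 b b' * dot3 c a')"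
  by (cases a rule: prod_cases3; cases b rule: prod_cases3; cases c rule: prod_cases3;
      cases a' rule: prod_cases3; cases b' rule: prod_cases3; cases c' rule: prod_cases3)
    (simp add: det3_def algebra_simps)

lemma cross3_eq_0_imp_scale3:
  assumes "u \<noteq> (0, 0, 0)" "cross3 u v = (0, 0, 0)"
  obtains k where "v = scale3 k u"
proof -
  obtain u1 u2 u3 where u: "u = (u1, u2, u3)" by (cases u rule: prod_cases3)
  obtain v1 v2 v3 where v: "v = (v1, v2, v3)" by (cases v rule: prod_cases3)
  have e: "u2 * v3 = u3 * v2" "u3 * v1 = u1 * v3" "u1 * v2 = u2 * v1"
    using assms(2) unfolding u v by auto
  consider "u1 \<noteq> 0" | "u2 \<noteq> 0" | "u3 \<noteq> 0" using assms(1) unfolding u by auto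
  then show ?thesis
  proof cases
    case 1
    then show ?thesis using e that[of "v1 / u1"] unfolding u v by (auto simp: field_simps)
  next
    case 2
    then show ?thesis using e that[of "v2 / u2"] unfolding u v by (auto simp: field_simps)
  next
    case 3
    then show ?thesis using e that[of "v3 / u3"] unfolding u v by (auto simp: field_simps)
  qed
qed

lemma orthogonal_imp_scale3_cross3:
  assumes "cross3 u v \<noteq> (0, 0, 0)" "dot3 l u = 0" "dot3 l v = 0"
  obtains k where "l = scale3 k (cross3 u v)"
proof (rule cross3_eq_0_imp_scale3[OF assms(1)])
  have "cross3 l (cross3 u v) = (0, 0, 0)"
    using cross3_cross3[of l u v] assms(2,3) by simp
  then show "cross3 (cross3 u v) l = (0, 0, 0)"
    by (cases l rule: prod_cases3; cases u rule: prod_cases3; cases v rule: prod_cases3)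
      (simp add: algebra_simps)
qed (use that in blast)

lemma det3_eq_0_if_orthogonal:
  assumes "l \<noteq> (0, 0, 0)" "dot3 l u = 0" "dot3 l v = 0" "dot3 l w = 0"
  shows "det3 u v w = 0"
  using scale3_det3_eq[of u v w l] assms by (simp add: scale3_eq_0_iff)

lemma det3_ne_0:
  assumes "b \<noteq> (0, 0, 0)" "dot3 m b = 0" "dot3 m c \<noteq> 0"
    and "dot3 l b = 0" "dot3 l c = 0" "dot3 l a \<noteq> 0"
  shows "det3 a b c \<noteq> 0"
proof -
  have bc: "cross3 b c \<noteq> (0, 0, 0)"
  proof
    assume "cross3 b c = (0, 0, 0)"
    then obtain k where "c = scale3 k b" using cross3_eq_0_imp_scale3 assms(1) by blast
    then show False using assms(2,3) by (simp add: dot3_scale3_right)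
  qed
  obtain k where "l = scale3 k (cross3 b c)"
    using orthogonal_imp_scale3_cross3[OF bc assms(4,5)] .
  then have "dot3 l a = k * det3 a b c" by (simp add: dot3_scale3_left dot3_cross3)
  then show ?thesis using assms(6) by auto
qed

lemma pt_eq: "pt v = {scale3 c v | c. c \<noteq> 0}"
  by (cases v rule: prod_cases3) (simp add: pt_def)

lemma pt_scale3:
  assumes "c \<noteq> 0"
  shows "pt (scale3 c p) = pt p"
proof -
  have mult: "scale3 e (scale3 c p) = scale3 (e * c) p" for e
    by (cases p rule: prod_cases3) (simp add: mult.assoc)
  have div: "scale3 e p = scale3 (e / c) (scale3 c p)" for e
    using assms by (cases p rule: prod_cases3) simp
  show ?thesis unfolding pt_eq
  proof (intro equalityI subsetI)
    fix v assume "v \<in> {scale3 e (scale3 c p) | e. e \<noteq> 0}"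
    then show "v \<in> {scale3 e p | e. e \<noteq> 0}" using assms by (auto simp: mult)
  next
    fix v assume "v \<in> {scale3 e p | e. e \<noteq> 0}"
    then obtain e where "e \<noteq> 0" "v = scale3 (e / c) (scale3 c p)" using div by blast
    then show "v \<in> {scale3 e (scale3 c p) | e. e \<noteq> 0}" using assms by auto
  qed
qed

lemma line_of_eq: "line_of l = {P \<in> PG2. \<exists>v\<in>P. dot3 l v = 0}"
  unfolding line_of_def by (cases l rule: prod_cases3) (auto simp: Bex_def)

lemma PG2E:
  assumes "P \<in> PG2"
  obtains p where "p \<noteq> (0, 0, 0)" "P = pt p"
  using assms unfolding PG2_def by blast

lemma pt_in_line_of_iff:
  assumes "p \<noteq> (0, 0, 0)"
  shows "pt p \<in> line_of l \<longleftrightarrow> dot3 l p = 0"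
proof
  assume "pt p \<in> line_of l"
  then obtain c where "c \<noteq> 0" "dot3 l (scale3 c p) = 0" unfolding line_of_eq pt_eq by blast
  then show "dot3 l p = 0" by (simp add: dot3_scale3_right)
next
  assume "dot3 l p = 0"
  moreover have "p \<in> pt p" unfolding pt_eq by (cases p rule: prod_cases3) force
  ultimately show "pt p \<in> line_of l"
    unfolding line_of_eq PG2_def using assms by blast
qed

lemma dot3_ne_0_if_not_concurrent:
  assumes "line_of k \<inter> line_of l \<inter> line_of m = {}"
    and "p \<noteq> (0, 0, 0)" "dot3 l p = 0" "dot3 m p = 0"
  shows "dot3 k p \<noteq> 0"
  using assms pt_in_line_of_iff[OF assms(2)] by blast

lemma lines_meet_at_most_once:
  assumes "L \<in> lines" "M \<in> lines" "L \<noteq> M" "X \<in> L" "X \<in> M" "Y \<in> L" "Y \<in> M"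
  shows "X = Y"
proof -
  obtain l m where l: "l \<noteq> (0, 0, 0)" "L = line_of l" and m: "m \<noteq> (0, 0, 0)" "M = line_of m"
    using assms(1,2) unfolding lines_def by blast
  have "X \<in> PG2" "Y \<in> PG2" using assms(4,6) unfolding l(2) line_of_eq by auto
  then obtain x y where x: "x \<noteq> (0, 0, 0)" "X = pt x" and y: "y \<noteq> (0, 0, 0)" "Y = pt y"
    by (metis PG2E)
  have on: "dot3 l x = 0" "dot3 m x = 0" "dot3 l y = 0" "dot3 m y = 0"
    using assms(4-7) x y unfolding l(2) m(2) by (auto simp: pt_in_line_of_iff)
  show ?thesis
  proof (cases "cross3 x y = (0, 0, 0)")
    case True
    then obtain k where k: "y = scale3 k x" using cross3_eq_0_imp_scale3 x(1) by blast
    then have "k \<noteq> 0" using y(1) by auto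
    then show ?thesis using x y k by (simp add: pt_scale3)
  next
    case False
    obtain k where k: "l = scale3 k (cross3 x y)"
      using orthogonal_imp_scale3_cross3[OF False on(1,3)] .
    obtain k' where k': "m = scale3 k' (cross3 x y)"
      using orthogonal_imp_scale3_cross3[OF False on(2,4)] .
    have "k \<noteq> 0" "k' \<noteq> 0" using l(1) m(1) k k' by auto
    then have "L = M" unfolding l(2) m(2) k k' line_of_eq by (simp add: dot3_scale3_left)
    then show ?thesis using assms(3) by simp
  qed
qed

locale field_involution =
  fixes s :: "'a::field \<Rightarrow> 'a"
  assumes s_add: "s (x + y) = s x + s y"
    and s_mult: "s (x * y) = s x * s y"
    and s_s: "s (s x) = x"
begin

lemma s_0 [simp]: "s 0 = 0"
  using s_add[of 0 0] by (metis add_cancel_right_right)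

lemma s_minus: "s (- x) = - s x"
  using s_add[of x "- x"] by (simp add: eq_neg_iff_add_eq_0 add.commute)

lemma s_diff: "s (x - y) = s x - s y"
  using s_add[of x "- y"] by (simp add: s_minus)

lemma s_eq_0_iff [simp]: "s x = 0 \<longleftrightarrow> x = 0"
  by (metis s_0 s_s)

lemmas s_simps = s_add s_mult s_s s_minus s_diff

definition herm_form :: "'a vec3 \<Rightarrow> 'a vec3 \<Rightarrow> 'a" where
  "herm_form u v = dot3 u (map3 s v)"

lemma herm_form_swap: "herm_form v u = s (herm_form u v)"
  by (cases u rule: prod_cases3; cases v rule: prod_cases3)
    (simp add: herm_form_def s_simps algebra_simps)

lemma herm_form_scale3: "herm_form (scale3 k u) (scale3 k u) = k * s k * herm_form u u"
  by (cases u rule: prod_cases3) (simp add: herm_form_def s_simps algebra_simps)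

lemma herm_form_add3_scale3:
  "herm_form (add3 (scale3 \<beta> b) (scale3 \<gamma> c)) (add3 (scale3 \<beta> b) (scale3 \<gamma> c)) =
     \<beta> * s \<beta> * herm_form b b + \<beta> * s \<gamma> * herm_form b c
   + \<gamma> * s \<beta> * herm_form c b + \<gamma> * s \<gamma> * herm_form c c"
  by (cases b rule: prod_cases3; cases c rule: prod_cases3)
    (simp add: herm_form_def s_simps algebra_simps)

lemma det3_map3: "det3 (map3 s a) (map3 s b) (map3 s c) = s (det3 a b c)"
  by (cases a rule: prod_cases3; cases b rule: prod_cases3; cases c rule: prod_cases3)
    (simp add: det3_def s_simps algebra_simps)

lemma isotropic_combination_skew:
  assumes "herm_form b b = 0" "herm_form c c = 0"
    and "herm_form (add3 (scale3 \<beta> b) (scale3 \<gamma> c)) (add3 (scale3 \<beta> b) (scale3 \<gamma> c)) = 0"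
  shows "s (\<beta> * s \<gamma> * herm_form b c) = - (\<beta> * s \<gamma> * herm_form b c)"
  using assms unfolding herm_form_add3_scale3
  by (simp add: herm_form_swap[of c b] s_simps eq_neg_iff_add_eq_0 algebra_simps)

lemma det3_mult_s_det3_isotropic:
  assumes "herm_form a a = 0" "herm_form b b = 0" "herm_form c c = 0"
  defines "t \<equiv> herm_form a b * herm_form b c * s (herm_form a c)"
  shows "det3 a b c * s (det3 a b c) = t + s t"
proof -
  have "det3 a b c * s (det3 a b c) =
     herm_form a a * (herm_form b b * herm_form c c - herm_form b c * herm_form c b)
   - herm_form a b * (herm_form b a * herm_form c c - herm_form b c * herm_form c a)
   + herm_form a c * (herm_form b a * herm_form c b - herm_form b b * herm_form c a)"
    unfolding herm_form_def det3_map3[symmetric] by (rule det3_mult_det3)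
  then show ?thesis using assms
    by (simp add: herm_form_swap[of b a] herm_form_swap[of c a] herm_form_swap[of c b]
        s_simps algebra_simps)
qed

text \<open>A product of three skew elements is skew, and by the collinearity relation the product
  \<open>w\<close> below equals \<open>- m s(m) s(t)\<close>; hence \<open>m s(m) (t + s t) = 0\<close>.\<close>
lemma skew_products_trace_zero:
  assumes "s (bx * s cx * hbc) = - (bx * s cx * hbc)"
    and "s (ay * s cy * hac) = - (ay * s cy * hac)"
    and "s (az * s bz * hab) = - (az * s bz * hab)"
    and collinear: "bx * cy * az = - (cx * ay * bz)"
    and "cx * ay * bz \<noteq> 0"
  defines "t \<equiv> hab * hbc * s hac"
  shows "t + s t = 0"
proof -
  define m where "m = cx * ay * bz"
  define w where "w = (ay * s cy * hac) * s (bx * s cx * hbc) * s (az * s bz * hab)"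
  have "w = m * s (bx * cy * az) * s t"
    unfolding w_def t_def m_def by (simp add: s_simps mult_ac)
  also have "s (bx * cy * az) = - s m" unfolding m_def collinear by (simp add: s_minus)
  finally have w: "w = - (m * s m * s t)" by simp
  have "s w = - w" unfolding w_def using assms(1-3) by (simp add: s_simps)
  then have "- (s m * m * t) = m * s m * s t" unfolding w by (simp add: s_simps)
  then have "(m * s m) * (t + s t) = 0" by (simp add: distrib_left mult_ac neg_eq_iff_add_eq_0)
  moreover have "m \<noteq> 0" unfolding m_def by fact
  ultimately show ?thesis by simp
qed

text \<open>Here \<open>x, y, z\<close> lie on the sides \<open>bc, ca, ab\<close> of the triangle \<open>a, b, c\<close>, with
  coordinates scaled by \<open>det3 a b c\<close>, and the last two hypotheses are Menelaus' condition for
  \<open>x, y, z\<close> to be collinear.\<close>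
lemma no_isotropic_menelaus_points:
  assumes isotropic: "herm_form a a = 0" "herm_form b b = 0" "herm_form c c = 0"
      "herm_form x x = 0" "herm_form y y = 0" "herm_form z z = 0"
    and "det3 a b c \<noteq> 0"
    and x: "scale3 (det3 a b c) x = add3 (scale3 bx b) (scale3 cx c)"
    and y: "scale3 (det3 a b c) y = add3 (scale3 ay a) (scale3 cy c)"
    and z: "scale3 (det3 a b c) z = add3 (scale3 az a) (scale3 bz b)"
    and menelaus: "bx * cy * az = - (cx * ay * bz)" "cx * ay * bz \<noteq> 0"
  shows False
proof -
  have isotropic_scaled: "herm_form (scale3 (det3 a b c) v) (scale3 (det3 a b c) v) = 0"
    if "herm_form v v = 0" for v
    using that by (simp add: herm_form_scale3)
  have "s (bx * s cx * herm_form b c) = - (bx * s cx * herm_form b c)"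
    using isotropic_scaled[OF isotropic(4)] unfolding x
    by (rule isotropic_combination_skew[OF isotropic(2,3)])
  moreover have "s (ay * s cy * herm_form a c) = - (ay * s cy * herm_form a c)"
    using isotropic_scaled[OF isotropic(5)] unfolding y
    by (rule isotropic_combination_skew[OF isotropic(1,3)])
  moreover have "s (az * s bz * herm_form a b) = - (az * s bz * herm_form a b)"
    using isotropic_scaled[OF isotropic(6)] unfolding z
    by (rule isotropic_combination_skew[OF isotropic(1,2)])
  ultimately have "det3 a b c * s (det3 a b c) = 0"
    using skew_products_trace_zero[OF _ _ _ menelaus] det3_mult_s_det3_isotropic[OF isotropic(1-3)]
    by simp
  then show False using \<open>det3 a b c \<noteq> 0\<close> by simp
qed

text \<open>Here
  \<open>a, b, c\<close> is the triangle cut out by the lines \<open>l1, l2, l3\<close> (\<open>a\<close> opposite \<open>l1\<close>, \<dots>), and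
  \<open>x, y, z\<close> are the points where \<open>l4\<close> meets \<open>l1, l2, l3\<close>.\<close>
theorem no_isotropic_complete_quadrilateral:
  assumes "b \<noteq> (0, 0, 0)" "l4 \<noteq> (0, 0, 0)"
    and isotropic: "herm_form a a = 0" "herm_form b b = 0" "herm_form c c = 0"
      "herm_form x x = 0" "herm_form y y = 0" "herm_form z z = 0"
    and on: "dot3 l1 b = 0" "dot3 l1 c = 0" "dot3 l1 x = 0"
      "dot3 l2 a = 0" "dot3 l2 c = 0" "dot3 l2 y = 0"
      "dot3 l3 a = 0" "dot3 l3 b = 0" "dot3 l3 z = 0"
      "dot3 l4 x = 0" "dot3 l4 y = 0" "dot3 l4 z = 0"
    and off: "dot3 l1 a \<noteq> 0" "dot3 l3 c \<noteq> 0" "dot3 l3 x \<noteq> 0" "dot3 l1 y \<noteq> 0" "dot3 l2 z \<noteq> 0"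
  shows False
proof -
  have nonzero: "l1 \<noteq> (0, 0, 0)" "l2 \<noteq> (0, 0, 0)" "l3 \<noteq> (0, 0, 0)"
    using off(1,2,5) by auto
  define D where "D = det3 a b c"
  have "D \<noteq> 0" unfolding D_def using det3_ne_0[OF assms(1) on(8) off(2) on(1,2) off(1)] .
  define bx cx ay cy az bz
    where "bx = det3 a x c" "cx = det3 a b x" "ay = det3 y b c" "cy = det3 a b y"
      "az = det3 z b c" "bz = det3 a z c"
  have x: "scale3 D x = add3 (scale3 bx b) (scale3 cx c)"
    using cramer3[of a b c x] det3_eq_0_if_orthogonal[OF nonzero(1) on(3,1,2)]
    unfolding D_def bx_cx_ay_cy_az_bz_def by simp
  have y: "scale3 D y = add3 (scale3 ay a) (scale3 cy c)"
    using cramer3[of a b c y] det3_eq_0_if_orthogonal[OF nonzero(2) on(4,6,5)]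
    unfolding D_def bx_cx_ay_cy_az_bz_def by simp
  have z: "scale3 D z = add3 (scale3 az a) (scale3 bz b)"
    using cramer3[of a b c z] det3_eq_0_if_orthogonal[OF nonzero(3) on(7,8,9)]
    unfolding D_def bx_cx_ay_cy_az_bz_def by simp
  have "det3 (scale3 D x) (scale3 D y) (scale3 D z) = 0"
    using det3_eq_0_if_orthogonal[OF assms(2)] on(10-12) by (simp add: dot3_scale3_right)
  then have "D * (bx * cy * az + cx * ay * bz) = 0"
    unfolding x y z det3_add3_scale3 by (simp add: D_def)
  then have "bx * cy * az = - (cx * ay * bz)"
    using \<open>D \<noteq> 0\<close> by (simp add: eq_neg_iff_add_eq_0)
  moreover have "dot3 l3 (scale3 D x) \<noteq> 0" "dot3 l1 (scale3 D y) \<noteq> 0" "dot3 l2 (scale3 D z) \<noteq> 0"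
    using \<open>D \<noteq> 0\<close> off(3-5) by (simp_all add: dot3_scale3_right)
  then have "cx * ay * bz \<noteq> 0"
    unfolding x y z using on by (auto simp: dot3_add3_right dot3_scale3_right)
  ultimately show False
    using no_isotropic_menelaus_points[OF isotropic] \<open>D \<noteq> 0\<close> x y z unfolding D_def by blast
qed

end

lemma power_card_UNIV_eq_self:
  fixes x :: "'a::{field,finite}"
  shows "x ^ CARD('a) = x"
proof (cases "x = 0")
  case True
  then show ?thesis by (simp add: finite_UNIV_card_ge_0)
next
  case False
  let ?U = "UNIV - {0 :: 'a}"
  have "(\<Prod>y\<in>?U. x * y) = (\<Prod>y\<in>?U. y)"
    by (rule prod.reindex_bij_witness[of _ "\<lambda>y. y / x" "\<lambda>y. x * y"]) (use False in auto)
  then have "x ^ card ?U * \<Prod>?U = \<Prod>?U" by (simp add: prod.distrib)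
  moreover have "\<Prod>?U \<noteq> 0" by simp
  ultimately have "x ^ card ?U = 1" by (metis mult_cancel_right2)
  moreover have "CARD('a) = Suc (card ?U)"
    using finite_UNIV_card_ge_0[where 'a = 'a] by (simp add: card_Diff_singleton)
  ultimately show ?thesis by (metis power_Suc mult.right_neutral)
qed


lemma card_eq_4E:
  assumes "card S = 4"
  obtains a b c d where "S = {a, b, c, d}"
    "a \<noteq> b" "a \<noteq> c" "a \<noteq> d" "b \<noteq> c" "b \<noteq> d" "c \<noteq> d"
proof -
  have "\<exists>a b c d. S = {a, b, c, d} \<and> a \<noteq> b \<and> a \<noteq> c \<and> a \<noteq> d \<and> b \<noteq> c \<and> b \<noteq> d \<and> c \<noteq> d"
    using assms by (auto simp: card_Suc_eq numeral_eq_Suc)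
  then show ?thesis using that by blast
qed

lemma frobenius_field_involution:
  assumes "primepow q" "CARD('a::{field,finite}) = q ^ 2"
  shows "field_involution (\<lambda>x::'a. x ^ q)"
proof
  obtain p k where pk: "prime p" "q = p ^ k" using assms(1) unfolding primepow_def by blast
  have char_prime: "prime CHAR('a)" by (rule prime_CHAR_semidom) (simp add: finite_imp_CHAR_pos)
  have "CHAR('a) dvd p ^ (k * 2)"
    using CHAR_dvd_CARD[where 'a = 'a] assms(2) pk(2) by (simp add: power_mult)
  then have "CHAR('a) = p"
    using char_prime pk(1) prime_dvd_power primes_dvd_imp_eq by blast
  fix x y :: 'a
  show "(x + y) ^ q = x ^ q + y ^ q"
    by (rule freshmans_dream'[OF char_prime]) (simp add: \<open>CHAR('a) = p\<close> pk(2))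
  show "(x * y) ^ q = x ^ q * y ^ q" by (simp add: power_mult_distrib)
  show "(x ^ q) ^ q = x"
    using power_card_UNIV_eq_self[of x] assms(2) by (simp add: power2_eq_square power_mult)
qed

lemma pt_in_herm_imp_isotropic:
  assumes "pt p \<in> herm q"
  shows "dot3 p (map3 (\<lambda>x. x ^ q) p) = 0"
proof -
  obtain x y z where xyz: "(x, y, z) \<in> pt p" "x ^ (q + 1) + y ^ (q + 1) + z ^ (q + 1) = 0"
    using assms unfolding herm_def by blast
  obtain c where c: "c \<noteq> 0" "(x, y, z) = scale3 c p" using xyz(1) unfolding pt_eq by auto
  obtain p1 p2 p3 where p: "p = (p1, p2, p3)" by (cases p rule: prod_cases3)
  have "c ^ (q + 1) * (p1 ^ (q + 1) + p2 ^ (q + 1) + p3 ^ (q + 1)) = 0"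
    using xyz(2) c(2) unfolding p by (simp add: power_mult_distrib algebra_simps)
  then have "p1 ^ (q + 1) + p2 ^ (q + 1) + p3 ^ (q + 1) = 0" using c(1) by simp
  then show ?thesis unfolding p by (simp add: algebra_simps)
qed

lemma herm_point_coordinates:
  assumes "P \<in> herm q" "P \<in> line_of l" "P \<in> line_of m"
  obtains p where "p \<noteq> (0, 0, 0)" "dot3 p (map3 (\<lambda>x. x ^ q) p) = 0" "dot3 l p = 0" "dot3 m p = 0"
proof -
  have "P \<in> PG2" using assms(1) unfolding herm_def by blast
  then obtain p where p: "p \<noteq> (0, 0, 0)" "P = pt p" by (rule PG2E)
  show thesis
    using that[OF p(1)] assms pt_in_herm_imp_isotropic[of p q] unfolding p(2)
    by (simp add: pt_in_line_of_iff[OF p(1)])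
qed

theorem herm_no_complete_quadrilateral:
  fixes S :: "'a::{field,finite} vec3 set set set"
  assumes "primepow q" "CARD('a) = q ^ 2" "S \<subseteq> lines" "card S = 4"
    and meet: "\<And>L M. L \<in> S \<Longrightarrow> M \<in> S \<Longrightarrow> L \<noteq> M \<Longrightarrow> \<exists>P \<in> herm q. P \<in> L \<and> P \<in> M"
    and nonconcurrent: "\<And>L M N. L \<in> S \<Longrightarrow> M \<in> S \<Longrightarrow> N \<in> S \<Longrightarrow>
      L \<noteq> M \<Longrightarrow> L \<noteq> N \<Longrightarrow> M \<noteq> N \<Longrightarrow> L \<inter> M \<inter> N = {}"
  shows False
proof -
  interpret field_involution "\<lambda>x::'a. x ^ q" using frobenius_field_involution assms(1,2) .
  obtain L1 L2 L3 L4 where S: "S = {L1, L2, L3, L4}" and distinct: "L1 \<noteq> L2" "L1 \<noteq> L3"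
    "L1 \<noteq> L4" "L2 \<noteq> L3" "L2 \<noteq> L4" "L3 \<noteq> L4"
    using assms(4) by (rule card_eq_4E)
  obtain l1 l2 l3 l4 where l: "L1 = line_of l1" "L2 = line_of l2" "L3 = line_of l3" "L4 = line_of l4"
    and l4: "l4 \<noteq> (0, 0, 0)"
    using assms(3) unfolding S lines_def by auto
  have inS: "L1 \<in> S" "L2 \<in> S" "L3 \<in> S" "L4 \<in> S" unfolding S by simp_all
  have vertex: "\<exists>p. p \<noteq> (0, 0, 0) \<and> herm_form p p = 0 \<and> dot3 l p = 0 \<and> dot3 m p = 0"
    if "L \<in> S" "M \<in> S" "L \<noteq> M" "L = line_of l" "M = line_of m" for L M l m
    using meet[OF that(1-3)] herm_point_coordinates that(4,5) unfolding herm_form_def by metis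
  obtain a where a: "a \<noteq> (0, 0, 0)" "herm_form a a = 0" "dot3 l2 a = 0" "dot3 l3 a = 0"
    using vertex[OF inS(2,3) distinct(4) l(2,3)] by blast
  obtain b where b: "b \<noteq> (0, 0, 0)" "herm_form b b = 0" "dot3 l1 b = 0" "dot3 l3 b = 0"
    using vertex[OF inS(1,3) distinct(2) l(1,3)] by blast
  obtain c where c: "c \<noteq> (0, 0, 0)" "herm_form c c = 0" "dot3 l1 c = 0" "dot3 l2 c = 0"
    using vertex[OF inS(1,2) distinct(1) l(1,2)] by blast
  obtain x where x: "x \<noteq> (0, 0, 0)" "herm_form x x = 0" "dot3 l1 x = 0" "dot3 l4 x = 0"
    using vertex[OF inS(1,4) distinct(3) l(1,4)] by blast
  obtain y where y: "y \<noteq> (0, 0, 0)" "herm_form y y = 0" "dot3 l2 y = 0" "dot3 l4 y = 0"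
    using vertex[OF inS(2,4) distinct(5) l(2,4)] by blast
  obtain z where z: "z \<noteq> (0, 0, 0)" "herm_form z z = 0" "dot3 l3 z = 0" "dot3 l4 z = 0"
    using vertex[OF inS(3,4) distinct(6) l(3,4)] by blast
  have off: "line_of k \<inter> line_of l \<inter> line_of m = {}"
    if "K \<in> S" "L \<in> S" "M \<in> S" "K \<noteq> L" "K \<noteq> M" "L \<noteq> M"
      "K = line_of k" "L = line_of l" "M = line_of m" for K L M k l m
    using nonconcurrent[OF that(1-6)] unfolding that(7-9) .
  have "dot3 l1 a \<noteq> 0"
    using off[OF inS(1,2,3) distinct(1,2,4) l(1,2,3)] a(1,3,4)
    by (rule dot3_ne_0_if_not_concurrent)
  moreover have "dot3 l3 c \<noteq> 0"
    using off[OF inS(3,1,2) distinct(2,4)[symmetric] distinct(1) l(3,1,2)] c(1,3,4)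
    by (rule dot3_ne_0_if_not_concurrent)
  moreover have "dot3 l3 x \<noteq> 0"
    using off[OF inS(3,1,4) distinct(2)[symmetric] distinct(6,3) l(3,1,4)] x(1,3,4)
    by (rule dot3_ne_0_if_not_concurrent)
  moreover have "dot3 l1 y \<noteq> 0"
    using off[OF inS(1,2,4) distinct(1,3,5) l(1,2,4)] y(1,3,4)
    by (rule dot3_ne_0_if_not_concurrent)
  moreover have "dot3 l2 z \<noteq> 0"
    using off[OF inS(2,3,4) distinct(4,5,6) l(2,3,4)] z(1,3,4)
    by (rule dot3_ne_0_if_not_concurrent)
  ultimately show False
    using no_isotropic_complete_quadrilateral[OF b(1) l4 a(2) b(2) c(2) x(2) y(2) z(2)
        b(3) c(3) x(3) a(3) c(4) y(3) a(4) b(4) z(3) x(4) y(4) z(4)] by blast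
qed

lemma Hstar_adj_sides_differ:
  assumes "Hstar_adj q side L M" "L \<in> lines" "M \<in> lines" "L \<noteq> M" "X \<in> L" "X \<in> M"
  shows "side X L \<noteq> side X M"
proof -
  obtain P where "P \<in> L" "P \<in> M" "side P L \<noteq> side P M"
    using assms(1) unfolding Hstar_adj_def clique_C_def by blast
  moreover have "X = P" using lines_meet_at_most_once assms(2-6) calculation(1,2) .
  ultimately show ?thesis by simp
qed

text \<open>The two sides of the cliques \<open>C\<^sub>P\<close> cannot separate three secants through \<open>P\<close>.\<close>
lemma Hstar_triangle_not_concurrent:
  assumes "Hstar_adj q side L M" "Hstar_adj q side L N" "Hstar_adj q side M N"
    and "L \<in> lines" "M \<in> lines" "N \<in> lines" "L \<noteq> M" "L \<noteq> N" "M \<noteq> N"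
  shows "L \<inter> M \<inter> N = {}"
proof (rule ccontr)
  assume "L \<inter> M \<inter> N \<noteq> {}"
  then obtain X where "X \<in> L" "X \<in> M" "X \<in> N" by blast
  then have "side X L \<noteq> side X M" "side X L \<noteq> side X N" "side X M \<noteq> side X N"
    using Hstar_adj_sides_differ[OF assms(1,4,5,7)] Hstar_adj_sides_differ[OF assms(2,4,6,8)]
      Hstar_adj_sides_differ[OF assms(3,5,6,9)] by blast+
  then show False by auto
qed

theorem mainTheorem7:
  fixes q :: nat
    and side :: "'a::{field,finite} vec3 set \<Rightarrow> 'a vec3 set set \<Rightarrow> bool"
  assumes "primepow q"
    and "CARD('a) = q ^ 2"
  shows "\<not> (\<exists>S \<subseteq> secants q. card S = 4 \<and>
            (\<forall>L\<in>S. \<forall>M\<in>S. L \<noteq> M \<longrightarrow> Hstar_adj q side L M))"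
proof
  assume "\<exists>S \<subseteq> secants q. card S = 4 \<and> (\<forall>L\<in>S. \<forall>M\<in>S. L \<noteq> M \<longrightarrow> Hstar_adj q side L M)"
  then obtain S where S: "S \<subseteq> secants q" "card S = 4"
    and "\<forall>L\<in>S. \<forall>M\<in>S. L \<noteq> M \<longrightarrow> Hstar_adj q side L M" by blast
  then have adj: "Hstar_adj q side L M" if "L \<in> S" "M \<in> S" "L \<noteq> M" for L M
    using that by blast
  have lines: "S \<subseteq> lines" using S(1) unfolding secants_def by blast
  show False
  proof (rule herm_no_complete_quadrilateral[OF assms lines S(2)])
    show "\<exists>P \<in> herm q. P \<in> L \<and> P \<in> M" if "L \<in> S" "M \<in> S" "L \<noteq> M" for L M
      using adj[OF that] unfolding Hstar_adj_def clique_C_def by blast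
    show "L \<inter> M \<inter> N = {}"
      if "L \<in> S" "M \<in> S" "N \<in> S" "L \<noteq> M" "L \<noteq> N" "M \<noteq> N" for L M N
      using that lines
      by (intro Hstar_triangle_not_concurrent[OF adj[OF that(1,2,4)] adj[OF that(1,3,5)]
          adj[OF that(2,3,6)]]) auto
  qed
qed

end
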